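(* Let $S=K[x_1,\ldots,x_n]$ and let $I$ be a square-free monomial ideal of $S$ of degree $d$ with minimal generating set $G(I)$. Then $I$ is an $f$-ideal if and only if $G(I)$ is $(n,d)^{th}$ perfect and $|G(I)|=\frac12 C_n^d$.
   Context: $K$ is a field; $C_n^d$ is the binomial coefficient. $sm(S)_d$ denotes the set of square-free monomials of degree $d$ in $S$. A monomial ideal $I$ is "of degree $d$" if all monomials in its minimal generating set $G(I)$ have degree $d$. For a set $A$ of square-free monomials, $\sqcup(A)=\{gx_i\mid g\in A,\ x_i\nmid g,\ 1\le i\le n\}$ and $\sqcap(A)=\{h\mid h\ne 1,\ h=g/x_i \text{ for some } g\in A \text{ and some } x_i\mid g\}$. A set $A\subseteq sm(S)_d$ is upper perfect if $\sqcup(A)=sm(S)_{d+1}$, lower perfect if $\sqcap(A)=sm(S)_{d-1}$, and $(n,d)^{th}$ perfect if it is both. Let $\sigma$ be the bijection from square-free monomials to subsets of $[n]$, $x_{i_1}\cdots x_{i_k}\mapsto\{i_1,\ldots,i_k\}$. The facet complex $\delta_{\mathcal{F}}(I)$ is the simplicial complex with facets $\sigma(g)$, $g\in G(I)$; the Stanley–Reisner complex is $\delta_{\mathcal{N}}(I)=\{\sigma(g)\mid g \text{ square-free monomial},\ g\notin I\}$. $I$ is an $f$-ideal if $\delta_{\mathcal{F}}(I)$ and $\delta_{\mathcal{N}}(I)$ have the same $f$-vector (number of faces of each dimension). *)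

theory Defs
  imports Main
begin

text \<open>Square-free monomials of S = K[x_1,...,x_n] are identified, via the bijection sigma,
  with subsets of {1..n}.  A square-free monomial ideal is determined by its minimal
  generating set G(I), given here as a set of subsets of {1..n}.\<close>

definition sm :: "nat \<Rightarrow> nat \<Rightarrow> nat set set" where
  "sm n d = {F. F \<subseteq> {1..n} \<and> card F = d}"

definition sqcup_set :: "nat \<Rightarrow> nat set set \<Rightarrow> nat set set" where
  "sqcup_set n A = {insert i g | g i. g \<in> A \<and> i \<in> {1..n} \<and> i \<notin> g}"

text \<open>The lower shadow: g/x_i with x_i dividing g, excluding the monomial 1.\<close>
definition sqcap_set :: "nat set set \<Rightarrow> nat set set" where
  "sqcap_set A = {g - {i} | g i. g \<in> A \<and> i \<in> g \<and> g - {i} \<noteq> {}}"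

definition upper_perfect :: "nat \<Rightarrow> nat \<Rightarrow> nat set set \<Rightarrow> bool" where
  "upper_perfect n d A \<longleftrightarrow> sqcup_set n A = sm n (d + 1)"

definition lower_perfect :: "nat \<Rightarrow> nat \<Rightarrow> nat set set \<Rightarrow> bool" where
  "lower_perfect n d A \<longleftrightarrow> sqcap_set A = sm n (d - 1)"

definition nd_perfect :: "nat \<Rightarrow> nat \<Rightarrow> nat set set \<Rightarrow> bool" where
  "nd_perfect n d A \<longleftrightarrow> upper_perfect n d A \<and> lower_perfect n d A"

text \<open>Membership of the square-free monomial sigma^{-1}(F) in the ideal generated by G.\<close>
definition in_ideal :: "nat set set \<Rightarrow> nat set \<Rightarrow> bool" where
  "in_ideal G F \<longleftrightarrow> (\<exists>g\<in>G. g \<subseteq> F)"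

definition facet_complex :: "nat set set \<Rightarrow> nat set set" where
  "facet_complex G = {F. \<exists>g\<in>G. F \<subseteq> g}"

definition SR_complex :: "nat \<Rightarrow> nat set set \<Rightarrow> nat set set" where
  "SR_complex n G = {F. F \<subseteq> {1..n} \<and> \<not> in_ideal G F}"

text \<open>Equal f-vectors: same number of faces with k vertices (dimension k-1) for every k.\<close>
definition f_ideal :: "nat \<Rightarrow> nat set set \<Rightarrow> bool" where
  "f_ideal n G \<longleftrightarrow>
     (\<forall>k. card {F \<in> facet_complex G. card F = k} = card {F \<in> SR_complex n G. card F = k})"

end

theory Submission
  imports Defs
begin

text \<open>Let \<open>G \<subseteq> sm n d\<close>. Compare the two complexes face size by face size. Below \<open>d\<close> the
  Stanley--Reisner complex contains every \<open>k\<close>-set, while the facet complex contains all of them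
  exactly when every \<open>(d-1)\<close>-set lies in a generator, i.e. when \<open>G\<close> is lower perfect. Above \<open>d\<close>
  the facet complex is empty, while the Stanley--Reisner complex is empty exactly when every
  \<open>(d+1)\<close>-set contains a generator, i.e. when \<open>G\<close> is upper perfect. In size \<open>d\<close> the faces are
  \<open>G\<close> and its complement in \<open>sm n d\<close>, which have equal size iff \<open>2 |G| = C(n,d)\<close>.\<close>

definition kfaces :: "nat set set \<Rightarrow> nat \<Rightarrow> nat set set" where
  "kfaces K k = {F \<in> K. card F = k}"

lemma f_ideal_iff_card_kfaces:
  "f_ideal n G \<longleftrightarrow> (\<forall>k. card (kfaces (facet_complex G) k) = card (kfaces (SR_complex n G) k))"
  unfolding f_ideal_def kfaces_def ..

lemma finite_sm: "finite (sm n k)"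
  unfolding sm_def by simp

lemma card_sm: "card (sm n k) = n choose k"
  unfolding sm_def using n_subsets[of "{1..n}"] by simp

lemma sm_memD:
  assumes "F \<in> sm n k"
  shows "F \<subseteq> {1..n}" "finite F" "card F = k"
  using assms finite_subset unfolding sm_def by auto

lemma finite_SR_complex: "finite (SR_complex n G)"
  unfolding SR_complex_def by (rule finite_subset[of _ "Pow {1..n}"]) auto

lemma exists_superset_with_card:
  assumes "finite A" "F \<subseteq> A" "card F \<le> m" "m \<le> card A"
  shows "\<exists>F'. F \<subseteq> F' \<and> F' \<subseteq> A \<and> card F' = m"
proof -
  have "finite F" using assms finite_subset by blast
  moreover have "m - card F \<le> card (A - F)"
    using assms \<open>finite F\<close> by (simp add: card_Diff_subset)
  then obtain T where T: "T \<subseteq> A - F" "card T = m - card F"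
    by (meson obtain_subset_with_card_n)
  moreover have "finite T" using T assms finite_subset by blast
  ultimately have "card (F \<union> T) = m"
    using assms by (subst card_Un_disjoint) auto
  thus ?thesis using T assms by (intro exI[of _ "F \<union> T"]) auto
qed

lemma kfaces_facet_complex_subset:
  assumes "G \<subseteq> sm n d"
  shows "kfaces (facet_complex G) k \<subseteq> sm n k"
  using assms unfolding kfaces_def facet_complex_def sm_def by blast

lemma kfaces_facet_complex_above:
  assumes "G \<subseteq> sm n d" "d < k"
  shows "kfaces (facet_complex G) k = {}"
proof -
  have "card F \<le> d" if "F \<subseteq> g" "g \<in> G" for F g
  proof -
    have "finite g" "card g = d" using that(2) assms(1) sm_memD(2,3) by blast+
    thus ?thesis using card_mono that(1) by metis
  qed
  thus ?thesis using assms(2) unfolding kfaces_def facet_complex_def by (auto simp: not_le[symmetric])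
qed

lemma kfaces_facet_complex_top:
  assumes "G \<subseteq> sm n d"
  shows "kfaces (facet_complex G) d = G"
proof -
  have "F = g" if "F \<subseteq> g" "g \<in> G" "card F = d" for F g
  proof -
    have "finite g" "card g = d" using that(2) assms sm_memD(2,3) by blast+
    thus ?thesis using card_subset_eq that(1,3) by metis
  qed
  moreover have "card g = d" if "g \<in> G" for g using that assms sm_memD(3) by blast
  ultimately show ?thesis unfolding kfaces_def facet_complex_def by blast
qed

lemma kfaces_SR_complex_below:
  assumes "G \<subseteq> sm n d" "k < d"
  shows "kfaces (SR_complex n G) k = sm n k"
proof -
  have "\<not> g \<subseteq> F" if "g \<in> G" "finite F" "card F = k" for g F
  proof
    assume "g \<subseteq> F"
    hence "card g \<le> k" using that(2,3) card_mono by metis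
    moreover have "card g = d" using that(1) assms(1) sm_memD(3) by blast
    ultimately show False using assms(2) by simp
  qed
  thus ?thesis
    using finite_subset unfolding kfaces_def SR_complex_def sm_def in_ideal_def by blast
qed

lemma kfaces_SR_complex_top:
  assumes "G \<subseteq> sm n d"
  shows "kfaces (SR_complex n G) d = sm n d - G"
proof -
  have "g = F" if "g \<in> G" "g \<subseteq> F" "F \<in> sm n d" for g F
  proof -
    have "card g = d" using that(1) assms sm_memD(3) by blast
    moreover have "finite F" "card F = d" using that(3) sm_memD(2,3) by blast+
    ultimately show ?thesis using card_subset_eq that(2) by metis
  qed
  thus ?thesis
    unfolding kfaces_def SR_complex_def sm_def in_ideal_def by blast
qed

lemma sqcap_set_subset_sm:
  assumes "G \<subseteq> sm n d"
  shows "sqcap_set G \<subseteq> sm n (d - 1)"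
proof
  fix F assume "F \<in> sqcap_set G"
  then obtain g i where "F = g - {i}" "g \<in> G" "i \<in> g" unfolding sqcap_set_def by blast
  thus "F \<in> sm n (d - 1)" using assms unfolding sm_def by auto
qed

lemma sqcup_set_subset_sm:
  assumes "G \<subseteq> sm n d"
  shows "sqcup_set n G \<subseteq> sm n (d + 1)"
proof
  fix F assume "F \<in> sqcup_set n G"
  then obtain g i where "F = insert i g" "g \<in> G" "i \<in> {1..n}" "i \<notin> g"
    unfolding sqcup_set_def by blast
  moreover have "finite g" using \<open>g \<in> G\<close> assms sm_memD(2) by blast
  ultimately show "F \<in> sm n (d + 1)" using assms unfolding sm_def by auto
qed

lemma lower_perfect_iff_kfaces_facet_complex:
  assumes G: "G \<subseteq> sm n d" and "2 \<le> d" and "G \<noteq> {}"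
  shows "lower_perfect n d G \<longleftrightarrow> (\<forall>k<d. kfaces (facet_complex G) k = sm n k)"
proof
  assume low: "lower_perfect n d G"
  have "d \<le> n"
  proof -
    obtain g where "g \<in> sm n d" using G \<open>G \<noteq> {}\<close> by blast
    hence "card g \<le> card {1..n}" using sm_memD(1) by (intro card_mono) simp_all
    thus ?thesis using \<open>g \<in> sm n d\<close> sm_memD(3) by simp
  qed
  show "\<forall>k<d. kfaces (facet_complex G) k = sm n k"
  proof (intro allI impI equalityI kfaces_facet_complex_subset[OF G] subsetI)
    fix k F assume "k < d" "F \<in> sm n k"
    have "F \<subseteq> {1..n}" "card F \<le> d - 1" using \<open>k < d\<close> sm_memD(1,3)[OF \<open>F \<in> sm n k\<close>] by auto
    moreover have "d - 1 \<le> card {1..n}" using \<open>d \<le> n\<close> by simp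
    ultimately have "\<exists>F'. F \<subseteq> F' \<and> F' \<subseteq> {1..n} \<and> card F' = d - 1"
      by (rule exists_superset_with_card[OF finite_atLeastAtMost])
    then obtain F' where F': "F \<subseteq> F'" "F' \<subseteq> {1..n}" "card F' = d - 1" by blast
    hence "F' \<in> sqcap_set G" using low unfolding lower_perfect_def sm_def by blast
    then obtain g i where "F' = g - {i}" "g \<in> G" unfolding sqcap_set_def by blast
    thus "F \<in> kfaces (facet_complex G) k"
      using F'(1) \<open>F \<in> sm n k\<close> sm_memD(3) unfolding kfaces_def facet_complex_def by blast
  qed
next
  assume "\<forall>k<d. kfaces (facet_complex G) k = sm n k"
  hence full: "kfaces (facet_complex G) (d - 1) = sm n (d - 1)" using \<open>2 \<le> d\<close> by simp
  have "F \<in> sqcap_set G" if "F \<in> sm n (d - 1)" for F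
  proof -
    have "F \<in> kfaces (facet_complex G) (d - 1)" using that full by simp
    then obtain g where g: "g \<in> G" "F \<subseteq> g" "card F = d - 1"
      unfolding kfaces_def facet_complex_def by blast
    have "finite g" "card g = d" using g(1) G sm_memD(2,3) by blast+
    moreover have "finite F" using finite_subset[OF g(2) \<open>finite g\<close>] .
    ultimately have "card (g - F) = 1"
      using card_Diff_subset[OF _ g(2)] g(3) \<open>2 \<le> d\<close> by simp
    then obtain i where "g - F = {i}" by (meson card_1_singletonE)
    hence "F = g - {i}" "i \<in> g" using g by auto
    moreover have "F \<noteq> {}" using g(3) \<open>2 \<le> d\<close> by auto
    ultimately show ?thesis using g(1) unfolding sqcap_set_def by blast
  qed
  thus "lower_perfect n d G"
    using sqcap_set_subset_sm[OF G] unfolding lower_perfect_def by blast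
qed

lemma upper_perfect_iff_kfaces_SR_complex:
  assumes G: "G \<subseteq> sm n d"
  shows "upper_perfect n d G \<longleftrightarrow> (\<forall>k>d. kfaces (SR_complex n G) k = {})"
proof
  assume up: "upper_perfect n d G"
  have "in_ideal G F" if "F \<subseteq> {1..n}" "d < card F" for F
  proof -
    have "d + 1 \<le> card F" using that(2) by simp
    then obtain F' where F': "F' \<subseteq> F" "card F' = d + 1" by (meson obtain_subset_with_card_n)
    hence "F' \<in> sqcup_set n G" using up that unfolding upper_perfect_def sm_def by auto
    then obtain g i where "F' = insert i g" "g \<in> G" unfolding sqcup_set_def by blast
    thus ?thesis using F' unfolding in_ideal_def by blast
  qed
  thus "\<forall>k>d. kfaces (SR_complex n G) k = {}"
    unfolding kfaces_def SR_complex_def by blast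
next
  assume "\<forall>k>d. kfaces (SR_complex n G) k = {}"
  hence covered: "in_ideal G F" if "F \<in> sm n (d + 1)" for F
    using that unfolding kfaces_def SR_complex_def sm_def by auto
  have "F \<in> sqcup_set n G" if F: "F \<in> sm n (d + 1)" for F
  proof -
    obtain g where g: "g \<in> G" "g \<subseteq> F" using covered[OF F] unfolding in_ideal_def by blast
    have "finite F" "card F = d + 1" using sm_memD(2,3)[OF F] by blast+
    moreover have "card g = d" using g(1) G sm_memD(3) by blast
    ultimately have "card (F - g) = 1"
      using card_Diff_subset[OF finite_subset[OF g(2)] g(2)] by simp
    then obtain i where "F - g = {i}" by (meson card_1_singletonE)
    hence "F = insert i g" "i \<notin> g" "i \<in> {1..n}" using g(2) sm_memD(1)[OF F] by auto
    thus ?thesis using g(1) unfolding sqcup_set_def by blast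
  qed
  thus "upper_perfect n d G"
    using sqcup_set_subset_sm[OF G] unfolding upper_perfect_def by blast
qed

lemma card_kfaces_below_iff_lower_perfect:
  assumes G: "G \<subseteq> sm n d" and "2 \<le> d" and "G \<noteq> {}"
  shows "(\<forall>k<d. card (kfaces (facet_complex G) k) = card (kfaces (SR_complex n G) k))
           \<longleftrightarrow> lower_perfect n d G"
proof -
  have "card (kfaces (facet_complex G) k) = card (sm n k) \<longleftrightarrow> kfaces (facet_complex G) k = sm n k"
    for k
    using kfaces_facet_complex_subset[OF G] finite_sm card_subset_eq by metis
  thus ?thesis
    using kfaces_SR_complex_below[OF G] lower_perfect_iff_kfaces_facet_complex[OF assms] by simp
qed

lemma card_kfaces_above_iff_upper_perfect:
  assumes G: "G \<subseteq> sm n d"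
  shows "(\<forall>k>d. card (kfaces (facet_complex G) k) = card (kfaces (SR_complex n G) k))
           \<longleftrightarrow> upper_perfect n d G"
proof -
  have "finite (kfaces (SR_complex n G) k)" for k
    using finite_SR_complex unfolding kfaces_def by simp
  thus ?thesis
    using kfaces_facet_complex_above[OF G] upper_perfect_iff_kfaces_SR_complex[OF G]
    by (metis card_0_eq card.empty)
qed

lemma card_kfaces_top_iff:
  assumes G: "G \<subseteq> sm n d"
  shows "card (kfaces (facet_complex G) d) = card (kfaces (SR_complex n G) d)
           \<longleftrightarrow> 2 * card G = n choose d"
proof -
  have "card G \<le> n choose d" using G finite_sm card_sm card_mono by metis
  moreover have "card (sm n d - G) = (n choose d) - card G"
    using G finite_sm card_sm by (simp add: card_Diff_subset finite_subset)
  ultimately show ?thesis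
    using kfaces_facet_complex_top[OF G] kfaces_SR_complex_top[OF G] by auto
qed

theorem theorem2p4:
  fixes n d :: nat and G :: "nat set set"
  assumes "d \<ge> 2"
    and "G \<noteq> {}"
    and "G \<subseteq> sm n d"
  shows "f_ideal n G \<longleftrightarrow> nd_perfect n d G \<and> 2 * card G = n choose d"
proof -
  let ?P = "\<lambda>k. card (kfaces (facet_complex G) k) = card (kfaces (SR_complex n G) k)"
  have "(\<forall>k. ?P k) \<longleftrightarrow> (\<forall>k<d. ?P k) \<and> ?P d \<and> (\<forall>k>d. ?P k)"
    by (metis linorder_neqE_nat)
  thus ?thesis
    using f_ideal_iff_card_kfaces card_kfaces_below_iff_lower_perfect[OF assms(3,1,2)]
      card_kfaces_top_iff[OF assms(3)] card_kfaces_above_iff_upper_perfect[OF assms(3)]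
    unfolding nd_perfect_def by blast
qed

end
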